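(* Let $c \in (0,1/2]$, $t_1 \in [0,1-2c]$, $t_2 \in [t_1+c,1-c]$, and let $p,q \in (0,1)$ with $p \neq q$. Let $F$, $\Lambda_{p,q}$ and $\gamma_r$ be as described in the context. Then for every $r \in \Lambda_{p,q}$, \[ \left(\int_{F \times F} |x-y|^2 \, d\gamma_r(x,y)\right)^{1/2} \;=\; \frac{t_2-t_1}{1-c}\sqrt{\frac{2c(p-q)^2+(1-c)(p+q-2r)}{1+c}}. \]
   Context: Let $S_1(x)=cx+t_1$ and $S_2(x)=cx+t_2$ on $[0,1]$. Let $F\subseteq[0,1]$ be the unique nonempty compact set with $F=S_1(F)\cup S_2(F)$. For $p\in(0,1)$, $\mu_p$ is the unique Borel probability measure with $\mu_p = p\,\mu_p\circ S_1^{-1} + (1-p)\,\mu_p\circ S_2^{-1}$. On $[0,1]^2$ define $S_{i,j}(x,y)=(S_i(x),S_j(y))$ for $i,j\in\{1,2\}$. Let $\Lambda_{p,q}$ be the open interval $\max\{0,p+q-1\}<r<\min\{p,q\}$. For $r\in\Lambda_{p,q}$, $\gamma_r$ is the unique Borel probability measure on $[0,1]^2$ satisfying $\gamma_r = r\,\gamma_r\circ S_{1,1}^{-1} + (p-r)\,\gamma_r\circ S_{1,2}^{-1} + (q-r)\,\gamma_r\circ S_{2,1}^{-1} + (1-p-q+r)\,\gamma_r\circ S_{2,2}^{-1}$; it is supported on $F\times F$ and is a coupling of $\mu_p$ and $\mu_q$. *)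

theory Defs
  imports "HOL-Probability.Probability"
begin

definition sim :: "real \<Rightarrow> real \<Rightarrow> real \<Rightarrow> real" where
  "sim c t x = c * x + t"

definition is_attractor :: "real \<Rightarrow> real \<Rightarrow> real \<Rightarrow> real set \<Rightarrow> bool" where
  "is_attractor c t1 t2 F \<longleftrightarrow>
     F \<noteq> {} \<and> compact F \<and> F \<subseteq> {0..1} \<and> F = sim c t1 ` F \<union> sim c t2 ` F"

definition Lambda :: "real \<Rightarrow> real \<Rightarrow> real set" where
  "Lambda p q = {max 0 (p + q - 1) <..< min p q}"

definition is_gamma ::
  "real \<Rightarrow> real \<Rightarrow> real \<Rightarrow> real \<Rightarrow> real \<Rightarrow> real \<Rightarrow> (real \<times> real) measure \<Rightarrow> bool" where
  "is_gamma c t1 t2 p q r \<gamma> \<longleftrightarrow>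
     sets \<gamma> = sets borel \<and> prob_space \<gamma> \<and> emeasure \<gamma> ({0..1} \<times> {0..1}) = 1 \<and>
     (\<forall>A \<in> sets borel.
        emeasure \<gamma> A =
          ennreal r * emeasure \<gamma> ((\<lambda>(x, y). (sim c t1 x, sim c t1 y)) -` A)
        + ennreal (p - r) * emeasure \<gamma> ((\<lambda>(x, y). (sim c t1 x, sim c t2 y)) -` A)
        + ennreal (q - r) * emeasure \<gamma> ((\<lambda>(x, y). (sim c t2 x, sim c t1 y)) -` A)
        + ennreal (1 - p - q + r) * emeasure \<gamma> ((\<lambda>(x, y). (sim c t2 x, sim c t2 y)) -` A))"

end

theory Submission
  imports Defs
begin

text \<open>The self-similarity equation of \<open>\<gamma>\<close> integrates to
  \<open>\<integral>f d\<gamma> = \<Sum>\<^sub>t w\<^sub>t \<integral>f(c z + t) d\<gamma>\<close>, summed over the four maps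
  \<open>z \<mapsto> c z + t\<close>, \<open>t \<in> {t\<^sub>1, t\<^sub>2}\<^sup>2\<close>, with weights
  \<open>r, p - r, q - r, 1 - p - q + r\<close>. For the linear form \<open>\<ell>(x, y) = x - y\<close> this yields one
  linear equation for \<open>E \<ell>\<close> and, as \<open>\<ell>(c z + t)\<^sup>2 = c\<^sup>2\<ell>(z)\<^sup>2 + 2c \<ell>(t) \<ell>(z) + \<ell>(t)\<^sup>2\<close>,
  one for \<open>E \<ell>\<^sup>2\<close>; solving them gives the formula. Applied to the distance from
  \<open>F \<times> F\<close>, which every map contracts by the factor \<open>c\<close>, the same identity shows that this
  distance has mean zero, so \<open>\<gamma>\<close> is concentrated on \<open>F \<times> F\<close>.\<close>

locale self_similar_measure = prob_space M for M :: "'a measure" +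
  fixes I :: "'i set" and w :: "'i \<Rightarrow> real" and T :: "'i \<Rightarrow> 'a \<Rightarrow> 'a"
  assumes finite_index: "finite I"
    and weight_pos: "i \<in> I \<Longrightarrow> 0 < w i"
    and measurable_map: "i \<in> I \<Longrightarrow> T i \<in> M \<rightarrow>\<^sub>M M"
    and emeasure_self_similar: "A \<in> sets M \<Longrightarrow>
      emeasure M A = (\<Sum>i\<in>I. ennreal (w i) * emeasure M (T i -` A \<inter> space M))"
begin

lemma nn_integral_self_similar:
  assumes "f \<in> borel_measurable M"
  shows "(\<integral>\<^sup>+x. f x \<partial>M) = (\<Sum>i\<in>I. ennreal (w i) * (\<integral>\<^sup>+x. f (T i x) \<partial>M))"
proof -
  have "integral\<^sup>N M f = (\<Sum>i\<in>I. ennreal (w i) * integral\<^sup>N (distr M M (T i)) f)"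
    using assms
  proof induct
    case (cong f g)
    then have "integral\<^sup>N N f = integral\<^sup>N N g" if "space N = space M" for N
      by (intro nn_integral_cong) (simp add: that)
    then show ?case
      using cong(4) by simp
  next
    case (set A)
    have "integral\<^sup>N (distr M M (T i)) (indicator A) = emeasure M (T i -` A \<inter> space M)" if "i \<in> I" for i
      using set measurable_map[OF that] by (simp add: emeasure_distr)
    then show ?case
      using set by (simp add: emeasure_self_similar cong: sum.cong)
  next
    case (mult u k)
    then have "integral\<^sup>N N (\<lambda>x. k * u x) = k * integral\<^sup>N N u" if "sets N = sets M" for N
      using mult(2) measurable_cong_sets[OF that refl] nn_integral_cmult by metis
    then show ?case
      by (simp add: mult(4) sum_distrib_left ac_simps)
  next
    case (add u v)
    then have "integral\<^sup>N N (\<lambda>x. v x + u x) = integral\<^sup>N N v + integral\<^sup>N N u"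
      if "sets N = sets M" for N
      using add(1,4) measurable_cong_sets[OF that refl] nn_integral_add by metis
    then show ?case
      by (simp add: add(3,7) sum.distrib distrib_left)
  next
    case (seq U)
    have SUP_integral: "integral\<^sup>N N (SUP j. U j) = (SUP j. integral\<^sup>N N (U j))"
      if "sets N = sets M" for N
    proof -
      have "U j \<in> borel_measurable N" for j
        using seq(1) measurable_cong_sets[OF that refl] by metis
      then show ?thesis
        using seq(4) nn_integral_monotone_convergence_SUP[of U N] by (simp add: SUP_apply[abs_def])
    qed
    have mono: "incseq (\<lambda>j. ennreal (w i) * integral\<^sup>N (distr M M (T i)) (U j))" for i
      using seq(4) by (auto simp: incseq_def le_fun_def intro!: mult_left_mono nn_integral_mono)
    have "integral\<^sup>N M (SUP j. U j) = (SUP j. \<Sum>i\<in>I. ennreal (w i) * integral\<^sup>N (distr M M (T i)) (U j))"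
      by (simp only: SUP_integral[OF refl] seq(3))
    also have "\<dots> = (\<Sum>i\<in>I. ennreal (w i) * (SUP j. integral\<^sup>N (distr M M (T i)) (U j)))"
      by (simp only: ennreal_SUP_sum[OF mono] SUP_mult_left_ennreal)
    also have "\<dots> = (\<Sum>i\<in>I. ennreal (w i) * integral\<^sup>N (distr M M (T i)) (SUP j. U j))"
      by (simp only: SUP_integral sets_distr)
    finally show ?case .
  qed
  moreover have "integral\<^sup>N (distr M M (T i)) f = (\<integral>\<^sup>+x. f (T i x) \<partial>M)" if "i \<in> I" for i
    using assms measurable_map[OF that] measurable_cong_sets[OF sets_distr refl] nn_integral_distr
    by metis
  ultimately show ?thesis
    by (simp cong: sum.cong)
qed

lemma sum_weights: "(\<Sum>i\<in>I. w i) = 1"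
proof -
  have "ennreal 1 = (\<Sum>i\<in>I. ennreal (w i))"
    using nn_integral_self_similar[of "\<lambda>_. 1"] by (simp add: emeasure_space_1)
  also have "\<dots> = ennreal (\<Sum>i\<in>I. w i)"
    using weight_pos by (simp add: less_imp_le)
  finally show ?thesis
    using weight_pos by (simp add: sum_nonneg less_imp_le)
qed

lemma integrable_comp_map:
  fixes f :: "'a \<Rightarrow> 'b::{banach, second_countable_topology}"
  assumes f: "integrable M f" and i: "i \<in> I"
  shows "integrable M (\<lambda>x. f (T i x))"
  unfolding integrable_iff_bounded
proof
  show "(\<lambda>x. f (T i x)) \<in> borel_measurable M"
    using measurable_compose[OF measurable_map[OF i] borel_measurable_integrable[OF f]] .
  have "ennreal (w i) * (\<integral>\<^sup>+x. norm (f (T i x)) \<partial>M)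
      \<le> (\<Sum>j\<in>I. ennreal (w j) * (\<integral>\<^sup>+x. norm (f (T j x)) \<partial>M))"
    by (rule member_le_sum) (use i finite_index in auto)
  also have "\<dots> = (\<integral>\<^sup>+x. norm (f x) \<partial>M)"
    using f by (intro nn_integral_self_similar[symmetric]) auto
  also have "\<dots> < \<infinity>"
    using f by (simp add: integrable_iff_bounded)
  finally show "(\<integral>\<^sup>+x. norm (f (T i x)) \<partial>M) < \<infinity>"
    using weight_pos[OF i] by (auto simp: ennreal_mult_less_top)
qed

lemma integral_self_similar_nonneg:
  assumes f: "integrable M f" and nonneg: "\<And>x. 0 \<le> f x"
  shows "(\<integral>x. f x \<partial>M) = (\<Sum>i\<in>I. w i * (\<integral>x. f (T i x) \<partial>M))"
proof -
  have "ennreal (\<integral>x. f x \<partial>M) = (\<integral>\<^sup>+x. f x \<partial>M)"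
    using f nonneg by (simp add: nn_integral_eq_integral)
  also have "\<dots> = (\<Sum>i\<in>I. ennreal (w i) * (\<integral>\<^sup>+x. f (T i x) \<partial>M))"
    using f by (intro nn_integral_self_similar) auto
  also have "\<dots> = (\<Sum>i\<in>I. ennreal (w i * (\<integral>x. f (T i x) \<partial>M)))"
    using integrable_comp_map[OF f] weight_pos nonneg
    by (intro sum.cong) (auto simp: nn_integral_eq_integral ennreal_mult less_imp_le)
  also have "\<dots> = ennreal (\<Sum>i\<in>I. w i * (\<integral>x. f (T i x) \<partial>M))"
    using weight_pos nonneg
    by (intro sum_ennreal) (auto intro!: mult_nonneg_nonneg integral_nonneg_AE simp: less_imp_le)
  finally show ?thesis
    using weight_pos nonneg
    by (subst (asm) ennreal_inj) (auto intro!: sum_nonneg mult_nonneg_nonneg integral_nonneg_AE simp: less_imp_le)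
qed

lemma integral_self_similar:
  fixes f :: "'a \<Rightarrow> real"
  assumes f: "integrable M f"
  shows "(\<integral>x. f x \<partial>M) = (\<Sum>i\<in>I. w i * (\<integral>x. f (T i x) \<partial>M))"
proof -
  define fpos where "fpos x = max 0 (f x)" for x
  define fneg where "fneg x = max 0 (- f x)" for x
  have f_eq: "f x = fpos x - fneg x" for x
    by (simp add: fpos_def fneg_def)
  have int: "integrable M fpos" "integrable M fneg"
    unfolding fpos_def[abs_def] fneg_def[abs_def] using f by auto
  have int_comp: "integrable M (\<lambda>x. fpos (T i x))" "integrable M (\<lambda>x. fneg (T i x))" if "i \<in> I" for i
    using integrable_comp_map[OF int(1) that] integrable_comp_map[OF int(2) that] by auto
  have "(\<integral>x. f x \<partial>M) = (\<integral>x. fpos x \<partial>M) - (\<integral>x. fneg x \<partial>M)"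
    unfolding f_eq using int by (rule Bochner_Integration.integral_diff)
  also have "\<dots> = (\<Sum>i\<in>I. w i * ((\<integral>x. fpos (T i x) \<partial>M) - (\<integral>x. fneg (T i x) \<partial>M)))"
    using integral_self_similar_nonneg[OF int(1)] integral_self_similar_nonneg[OF int(2)]
    by (simp add: fpos_def fneg_def right_diff_distrib sum_subtractf)
  also have "\<dots> = (\<Sum>i\<in>I. w i * (\<integral>x. f (T i x) \<partial>M))"
    using int_comp by (simp add: f_eq Bochner_Integration.integral_diff cong: sum.cong)
  finally show ?thesis .
qed

end

lemma infdist_le_lipschitz_image:
  fixes g :: "'a::heine_borel \<Rightarrow> 'a"
  assumes "closed F" "F \<noteq> {}" "g ` F \<subseteq> F" "\<And>y. dist (g x) (g y) \<le> L * dist x y"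
  shows "infdist (g x) F \<le> L * infdist x F"
proof -
  obtain y where y: "y \<in> F" "infdist x F = dist x y"
    using infdist_attains_inf[OF assms(1,2)] by blast
  have "infdist (g x) F \<le> dist (g x) (g y)"
    using y(1) assms(3) by (intro infdist_le) auto
  also have "\<dots> \<le> L * infdist x F"
    using assms(4) y(2) by simp
  finally show ?thesis .
qed

locale homogeneous_self_similar =
  self_similar_measure M I w "\<lambda>t x. c *\<^sub>R x + t"
  for M :: "'a::euclidean_space measure" and I w and c :: real +
  fixes K :: "'a set"
  assumes sets_M: "sets M = sets borel"
    and compact_K: "compact K" and AE_in_K: "AE x in M. x \<in> K"
begin

lemma integrable_continuous:
  fixes f :: "'a \<Rightarrow> real"
  assumes "continuous_on UNIV f"
  shows "integrable M f"
proof -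
  obtain B where B: "\<And>x. x \<in> K \<Longrightarrow> norm (f x) \<le> B"
    using compact_imp_bounded[OF compact_continuous_image[OF continuous_on_subset[OF assms] compact_K]]
    by (auto simp: bounded_iff)
  have "f \<in> borel_measurable M"
    using borel_measurable_continuous_onI[OF assms] by (simp add: measurable_cong_sets[OF sets_M refl])
  then show ?thesis
    using AE_in_K B by (intro integrable_const_bound[where B=B]) auto
qed

lemma integrable_bounded_linear:
  fixes l :: "'a \<Rightarrow> real"
  assumes "bounded_linear l"
  shows "integrable M l" "integrable M (\<lambda>x. (l x)\<^sup>2)"
  using integrable_continuous[OF linear_continuous_on[OF assms]]
    integrable_continuous[OF continuous_on_power[OF linear_continuous_on[OF assms]]] by auto

lemma mean_bounded_linear:
  fixes l :: "'a \<Rightarrow> real"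
  assumes l: "bounded_linear l"
  shows "(1 - c) * (\<integral>x. l x \<partial>M) = (\<Sum>t\<in>I. w t * l t)"
proof -
  interpret l: bounded_linear l by (rule l)
  let ?E = "\<integral>x. l x \<partial>M"
  have "?E = (\<Sum>t\<in>I. w t * (\<integral>x. l (c *\<^sub>R x + t) \<partial>M))"
    by (rule integral_self_similar[OF integrable_bounded_linear(1)[OF l]])
  also have "\<dots> = (\<Sum>t\<in>I. w t * (\<integral>x. c * l x + l t \<partial>M))"
    by (simp add: l.add l.scaleR)
  also have "\<dots> = (\<Sum>t\<in>I. w t * (c * ?E + l t))"
    using integrable_bounded_linear(1)[OF l] by (simp add: prob_space)
  also have "\<dots> = (\<Sum>t\<in>I. w t) * (c * ?E) + (\<Sum>t\<in>I. w t * l t)"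
    by (simp add: distrib_left sum.distrib sum_distrib_right)
  finally show ?thesis
    using sum_weights by algebra
qed

lemma second_moment_bounded_linear:
  fixes l :: "'a \<Rightarrow> real"
  assumes l: "bounded_linear l"
  shows "(1 - c\<^sup>2) * (\<integral>x. (l x)\<^sup>2 \<partial>M)
    = 2 * c * (\<integral>x. l x \<partial>M) * (\<Sum>t\<in>I. w t * l t) + (\<Sum>t\<in>I. w t * (l t)\<^sup>2)"
proof -
  interpret l: bounded_linear l by (rule l)
  let ?E = "\<integral>x. l x \<partial>M" and ?V = "\<integral>x. (l x)\<^sup>2 \<partial>M"
  note int = integrable_bounded_linear[OF l]
  have "?V = (\<Sum>t\<in>I. w t * (\<integral>x. (l (c *\<^sub>R x + t))\<^sup>2 \<partial>M))"
    by (rule integral_self_similar[OF int(2)])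
  also have "\<dots> = (\<Sum>t\<in>I. w t * (\<integral>x. c\<^sup>2 * (l x)\<^sup>2 + 2 * c * l t * l x + (l t)\<^sup>2 \<partial>M))"
    by (simp add: l.add l.scaleR power2_eq_square algebra_simps)
  also have "\<dots> = (\<Sum>t\<in>I. w t * (c\<^sup>2 * ?V + 2 * c * l t * ?E + (l t)\<^sup>2))"
    using int by (simp add: prob_space)
  also have "\<dots> = (\<Sum>t\<in>I. w t * (c\<^sup>2 * ?V)) + (\<Sum>t\<in>I. 2 * c * ?E * (w t * l t))
      + (\<Sum>t\<in>I. w t * (l t)\<^sup>2)"
    by (simp add: distrib_left sum.distrib mult_ac)
  also have "\<dots> = (\<Sum>t\<in>I. w t) * (c\<^sup>2 * ?V) + 2 * c * ?E * (\<Sum>t\<in>I. w t * l t)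
      + (\<Sum>t\<in>I. w t * (l t)\<^sup>2)"
    by (simp only: sum_distrib_left sum_distrib_right)
  finally show ?thesis
    using sum_weights by algebra
qed

lemma AE_in_invariant_closed:
  assumes F: "closed F" "F \<noteq> {}" and c: "\<bar>c\<bar> < 1"
    and invariant: "\<And>t. t \<in> I \<Longrightarrow> (\<lambda>x. c *\<^sub>R x + t) ` F \<subseteq> F"
  shows "AE x in M. x \<in> F"
proof -
  define d where "d x = infdist x F" for x
  have int: "integrable M d"
    unfolding d_def by (intro integrable_continuous continuous_intros)
  have d_nonneg: "0 \<le> d x" for x
    by (simp add: d_def infdist_nonneg)
  have contract: "d (c *\<^sub>R x + t) \<le> \<bar>c\<bar> * d x" if "t \<in> I" for t x
    unfolding d_def using F invariant[OF that]
    by (intro infdist_le_lipschitz_image) (auto simp: dist_norm scaleR_diff_right[symmetric])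
  have "(\<integral>x. d x \<partial>M) = (\<Sum>t\<in>I. w t * (\<integral>x. d (c *\<^sub>R x + t) \<partial>M))"
    by (rule integral_self_similar[OF int])
  also have "\<dots> \<le> (\<Sum>t\<in>I. w t * (\<integral>x. \<bar>c\<bar> * d x \<partial>M))"
    using int integrable_comp_map[OF int] contract weight_pos
    by (intro sum_mono mult_left_mono integral_mono) (auto simp: less_imp_le)
  also have "\<dots> = (\<Sum>t\<in>I. w t) * (\<bar>c\<bar> * (\<integral>x. d x \<partial>M))"
    by (simp add: sum_distrib_right)
  finally have "(1 - \<bar>c\<bar>) * (\<integral>x. d x \<partial>M) \<le> 0"
    by (simp add: sum_weights left_diff_distrib)
  moreover have "0 \<le> (\<integral>x. d x \<partial>M)"
    by (simp add: integral_nonneg_AE d_nonneg)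
  ultimately have "(\<integral>x. d x \<partial>M) = 0"
    using c by (simp add: mult_le_0_iff)
  then have "AE x in M. d x = 0"
    using integral_nonneg_eq_0_iff_AE[OF int] d_nonneg by simp
  then show ?thesis
    using in_closed_iff_infdist_zero[OF F] by (auto simp: d_def)
qed

end

text \<open>The weight of the map \<open>z \<mapsto> c z + t\<close> in the self-similarity equation of \<open>\<gamma>\<close>;
  the four maps \<open>S\<^sub>i\<^sub>j\<close> are indexed by their translation vectors \<open>t \<in> {t\<^sub>1, t\<^sub>2}\<^sup>2\<close>.\<close>
definition coupling_weight :: "real \<Rightarrow> real \<Rightarrow> real \<Rightarrow> real \<Rightarrow> real \<times> real \<Rightarrow> real" where
  "coupling_weight t1 p q r t =
    (if fst t = t1 then if snd t = t1 then r else p - r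
     else if snd t = t1 then q - r else 1 - p - q + r)"

lemma sum_coupling_weight:
  assumes "t1 \<noteq> t2"
  shows "(\<Sum>t\<in>{t1, t2} \<times> {t1, t2}. coupling_weight t1 p q r t * f t)
    = r * f (t1, t1) + (p - r) * f (t1, t2) + (q - r) * f (t2, t1) + (1 - p - q + r) * f (t2, t2)"
  using assms by (simp add: coupling_weight_def insert_Times_insert)

lemma sim_pair_eq_affine:
  "(\<lambda>(x, y). (sim c a x, sim c b y)) = (\<lambda>z. c *\<^sub>R z + (a, b))"
  by (auto simp: sim_def)

lemma is_gamma_imp_homogeneous_self_similar:
  assumes gamma: "is_gamma c t1 t2 p q r \<gamma>" and "t1 \<noteq> t2" and "r \<in> Lambda p q"
  shows "homogeneous_self_similar \<gamma> ({t1, t2} \<times> {t1, t2}) (coupling_weight t1 p q r) c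
    ({0..1} \<times> {0..1})"
proof -
  have sets: "sets \<gamma> = sets borel" and prob: "prob_space \<gamma>"
    and box: "emeasure \<gamma> ({0..1} \<times> {0..1}) = 1"
    using gamma by (simp_all add: is_gamma_def)
  interpret prob_space \<gamma> by (rule prob)
  have space: "space \<gamma> = UNIV"
    using sets_eq_imp_space_eq[OF sets] by simp
  have affine_measurable: "(\<lambda>z. c *\<^sub>R z + t) \<in> \<gamma> \<rightarrow>\<^sub>M \<gamma>" for t :: "real \<times> real"
    using measurable_cong_sets[OF sets sets] by (simp add: continuous_intros borel_measurable_continuous_onI)
  show ?thesis
  proof unfold_locales
    show "0 < coupling_weight t1 p q r t" if "t \<in> {t1, t2} \<times> {t1, t2}" for t
      using that \<open>t1 \<noteq> t2\<close> \<open>r \<in> Lambda p q\<close> by (auto simp: coupling_weight_def Lambda_def)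
    show "emeasure \<gamma> A = (\<Sum>t\<in>{t1, t2} \<times> {t1, t2}.
        ennreal (coupling_weight t1 p q r t) * emeasure \<gamma> ((\<lambda>z. c *\<^sub>R z + t) -` A \<inter> space \<gamma>))"
      if "A \<in> sets \<gamma>" for A
      using gamma that \<open>t1 \<noteq> t2\<close>
      by (simp add: is_gamma_def sets space sim_pair_eq_affine coupling_weight_def insert_Times_insert)
    show "AE z in \<gamma>. z \<in> {0..1} \<times> {0..1}"
      using box by (intro AE_prob_1) (simp add: emeasure_eq_measure)
  qed (use sets affine_measurable in \<open>auto intro: compact_Times\<close>)
qed

lemma is_gamma_AE_attractor:
  assumes gamma: "is_gamma c t1 t2 p q r \<gamma>" and "t1 \<noteq> t2" and "r \<in> Lambda p q"
    and "\<bar>c\<bar> < 1" and F: "is_attractor c t1 t2 F"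
  shows "AE z in \<gamma>. z \<in> F \<times> F"
proof -
  interpret homogeneous_self_similar \<gamma> "{t1, t2} \<times> {t1, t2}" "coupling_weight t1 p q r" c
    "{0..1} \<times> {0..1}"
    using assms(1-3) by (rule is_gamma_imp_homogeneous_self_similar)
  have F_closed: "closed F" and F_nonempty: "F \<noteq> {}" and F_eq: "F = sim c t1 ` F \<union> sim c t2 ` F"
    using F by (auto simp: is_attractor_def compact_imp_closed)
  have "c * x + a \<in> F" if "x \<in> F" "a \<in> {t1, t2}" for x a
    using that by (subst F_eq) (auto simp: sim_def)
  then have "(\<lambda>z. c *\<^sub>R z + t) ` (F \<times> F) \<subseteq> F \<times> F" if "t \<in> {t1, t2} \<times> {t1, t2}" for t
    using that by auto
  then show ?thesis
    using F_closed F_nonempty \<open>\<bar>c\<bar> < 1\<close> by (intro AE_in_invariant_closed) (auto intro: closed_Times)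
qed

lemma is_gamma_second_moment_difference:
  assumes gamma: "is_gamma c t1 t2 p q r \<gamma>" and "t1 \<noteq> t2" and "r \<in> Lambda p q"
  shows "(1 - c)\<^sup>2 * (1 + c) * (\<integral>z. (fst z - snd z)\<^sup>2 \<partial>\<gamma>)
    = (t2 - t1)\<^sup>2 * (2 * c * (p - q)\<^sup>2 + (1 - c) * (p + q - 2 * r))"
proof -
  interpret homogeneous_self_similar \<gamma> "{t1, t2} \<times> {t1, t2}" "coupling_weight t1 p q r" c
    "{0..1} \<times> {0..1}"
    using assms by (rule is_gamma_imp_homogeneous_self_similar)
  have l: "bounded_linear (\<lambda>z :: real \<times> real. fst z - snd z)"
    by (intro bounded_linear_sub bounded_linear_fst bounded_linear_snd)
  have "(1 - c) * (\<integral>z. fst z - snd z \<partial>\<gamma>) = (p - q) * (t1 - t2)"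
    using mean_bounded_linear[OF l, unfolded sum_coupling_weight[OF \<open>t1 \<noteq> t2\<close>]]
    by (simp add: algebra_simps)
  moreover have "(1 - c\<^sup>2) * (\<integral>z. (fst z - snd z)\<^sup>2 \<partial>\<gamma>)
      = 2 * c * (\<integral>z. fst z - snd z \<partial>\<gamma>) * ((p - q) * (t1 - t2)) + (p + q - 2 * r) * (t1 - t2)\<^sup>2"
    using second_moment_bounded_linear[OF l, unfolded sum_coupling_weight[OF \<open>t1 \<noteq> t2\<close>]]
    by (simp add: power2_eq_square algebra_simps)
  ultimately show ?thesis
    by (simp add: power2_eq_square) algebra
qed

lemma set_integral_eq_integral_AE:
  fixes f :: "'a \<Rightarrow> 'b::{banach, second_countable_topology}"
  assumes "AE x in M. x \<in> A" "A \<in> sets M" "f \<in> borel_measurable M"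
  shows "(LINT x : A | M. f x) = (\<integral>x. f x \<partial>M)"
  unfolding set_lebesgue_integral_def using assms by (intro integral_cong_AE) auto

theorem theorem2p3:
  fixes c t1 t2 p q r :: real and F :: "real set" and \<gamma> :: "(real \<times> real) measure"
  assumes "0 < c" "c \<le> 1/2"
    and "0 \<le> t1" "t1 \<le> 1 - 2*c"
    and "t1 + c \<le> t2" "t2 \<le> 1 - c"
    and "0 < p" "p < 1" "0 < q" "q < 1" "p \<noteq> q"
    and "is_attractor c t1 t2 F"
    and "r \<in> Lambda p q"
    and "is_gamma c t1 t2 p q r \<gamma>"
  shows "sqrt (LINT z : F \<times> F | \<gamma>. (fst z - snd z)\<^sup>2) =
    (t2 - t1) / (1 - c) * sqrt ((2*c*(p - q)\<^sup>2 + (1 - c)*(p + q - 2*r)) / (1 + c))"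
proof -
  note attractor = assms(12) and gamma = assms(14) and r = assms(13)
  have "t1 \<noteq> t2" "\<bar>c\<bar> < 1" and c: "0 < 1 - c" "0 < 1 + c" and "t1 \<le> t2"
    using assms(1,2,5) by auto
  have sets: "sets \<gamma> = sets borel"
    using gamma by (simp add: is_gamma_def)
  have "F \<times> F \<in> sets \<gamma>"
    using attractor unfolding sets is_attractor_def
    by (intro borel_closed closed_Times) (auto intro: compact_imp_closed)
  moreover have "(\<lambda>z. (fst z - snd z)\<^sup>2) \<in> borel_measurable \<gamma>"
    unfolding measurable_cong_sets[OF sets refl]
    by (intro borel_measurable_continuous_onI continuous_intros)
  ultimately have "(LINT z : F \<times> F | \<gamma>. (fst z - snd z)\<^sup>2) = (\<integral>z. (fst z - snd z)\<^sup>2 \<partial>\<gamma>)"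
    by (intro set_integral_eq_integral_AE is_gamma_AE_attractor[OF gamma \<open>t1 \<noteq> t2\<close> r \<open>\<bar>c\<bar> < 1\<close> attractor])
  also have "\<dots> = (t2 - t1)\<^sup>2 * (2*c*(p - q)\<^sup>2 + (1 - c)*(p + q - 2*r)) / ((1 - c)\<^sup>2 * (1 + c))"
    using is_gamma_second_moment_difference[OF gamma \<open>t1 \<noteq> t2\<close> r] c
    by (intro eq_divide_imp) (simp_all add: mult.commute)
  also have "\<dots> = ((t2 - t1) / (1 - c))\<^sup>2 * ((2*c*(p - q)\<^sup>2 + (1 - c)*(p + q - 2*r)) / (1 + c))"
    by (simp add: power_divide)
  finally have "sqrt (LINT z : F \<times> F | \<gamma>. (fst z - snd z)\<^sup>2)
      = \<bar>(t2 - t1) / (1 - c)\<bar> * sqrt ((2*c*(p - q)\<^sup>2 + (1 - c)*(p + q - 2*r)) / (1 + c))"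
    by (simp only: real_sqrt_mult real_sqrt_abs)
  then show ?thesis
    using c \<open>t1 \<le> t2\<close> by simp
qed

end
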